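(* For a nondegenerate m-triangle, the torque $\mathbf t_1$ of the gravitational forces at $P_1$ with respect to the center of mass vanishes if and only if $r_{12}=r_{13}$, and all three torques $\mathbf t_1,\mathbf t_2,\mathbf t_3$ vanish if and only if the triangle is equilateral.
   Context: Masses $m_1,m_2,m_3>0$, $m_1+m_2+m_3=1$; position vectors $\mathbf a_i=\overrightarrow{OP_i}$ with $\sum m_i\mathbf a_i=0$; $r_{ij}=|\mathbf a_i-\mathbf a_j|$; $\mathbf t_i=\mathbf a_i\times\sum_{j\ne i}\frac{m_im_j}{r_{ij}^3}(\mathbf a_j-\mathbf a_i)$; nondegenerate means $P_1,P_2,P_3$ are not collinear. *)

theory Defs
  imports "HOL-Analysis.Analysis" "HOL-Analysis.Cross3"
begin

text \<open>Three bodies indexed by 1, 2, 3. Masses m i, position vectors a i in R^3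
  (relative to the origin O, which is the centre of mass).\<close>

definition rdist :: "(nat \<Rightarrow> real^3) \<Rightarrow> nat \<Rightarrow> nat \<Rightarrow> real" where
  "rdist a i j = norm (a i - a j)"

definition torque :: "(nat \<Rightarrow> real) \<Rightarrow> (nat \<Rightarrow> real^3) \<Rightarrow> nat \<Rightarrow> real^3" where
  "torque m a i = cross3 (a i)
     (\<Sum>j\<in>{1,2,3} - {i}. ((m i * m j) / (rdist a i j) ^ 3) *\<^sub>R (a j - a i))"

end

theory Submission
  imports Defs
begin

text \<open>Eliminating \<open>a\<^sub>i\<close> via the centre-of-mass relation turns both cross products in the
  torque at \<open>a\<^sub>i\<close> into multiples of \<open>a\<^sub>j \<times> a\<^sub>k\<close>, which is nonzero for a nondegenerate
  triangle. The torque then equals \<open>m\<^sub>j m\<^sub>k (r\<^sub>i\<^sub>j\<^sup>-\<^sup>3 - r\<^sub>i\<^sub>k\<^sup>-\<^sup>3) (a\<^sub>j \<times> a\<^sub>k)\<close>, so it vanishes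
  exactly when \<open>r\<^sub>i\<^sub>j = r\<^sub>i\<^sub>k\<close>; all three torques vanish iff all three sides agree.\<close>

lemma cross3_center_of_mass:
  fixes p q s :: "real^3"
  assumes "mp *\<^sub>R p + mq *\<^sub>R q + ms *\<^sub>R s = 0"
  shows "mp *\<^sub>R cross3 p q = ms *\<^sub>R cross3 q s"
    and "mp *\<^sub>R cross3 p s = - (mq *\<^sub>R cross3 q s)"
proof -
  have p: "mp *\<^sub>R p = - (mq *\<^sub>R q + ms *\<^sub>R s)"
    using assms by (simp only: eq_neg_iff_add_eq_0 add.assoc)
  show "mp *\<^sub>R cross3 p q = ms *\<^sub>R cross3 q s"
    using arg_cong[OF p, of "\<lambda>x. cross3 x q"]
    by (simp add: cross_mult_left Cross3.left_diff_distrib cross_skew[of s q])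
  show "mp *\<^sub>R cross3 p s = - (mq *\<^sub>R cross3 q s)"
    using arg_cong[OF p, of "\<lambda>x. cross3 x s"]
    by (simp add: cross_mult_left Cross3.left_diff_distrib)
qed

lemma cross3_two_forces_center_of_mass:
  fixes p q s :: "real^3"
  assumes "mp *\<^sub>R p + mq *\<^sub>R q + ms *\<^sub>R s = 0"
  shows "mp *\<^sub>R cross3 p (\<alpha> *\<^sub>R (q - p) + \<beta> *\<^sub>R (s - p)) = (\<alpha> * ms - \<beta> * mq) *\<^sub>R cross3 q s"
proof -
  have "mp *\<^sub>R cross3 p (\<alpha> *\<^sub>R (q - p) + \<beta> *\<^sub>R (s - p))
      = \<alpha> *\<^sub>R (mp *\<^sub>R cross3 p q) + \<beta> *\<^sub>R (mp *\<^sub>R cross3 p s)"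
    by (simp add: cross_add_right cross_mult_right Cross3.right_diff_distrib algebra_simps)
  also have "\<dots> = (\<alpha> * ms - \<beta> * mq) *\<^sub>R cross3 q s"
    using cross3_center_of_mass[OF assms] by (simp add: algebra_simps)
  finally show ?thesis .
qed

lemma cross3_ne_0_center_of_mass:
  fixes p q s :: "real^3"
  assumes "mp *\<^sub>R p + mq *\<^sub>R q + ms *\<^sub>R s = 0" and "mp \<noteq> 0"
    and "\<not> collinear {p, q, s}"
  shows "cross3 q s \<noteq> 0"
proof
  assume qs: "cross3 q s = 0"
  then have "cross3 p q = 0" "cross3 p s = 0"
    using cross3_center_of_mass[OF assms(1)] \<open>mp \<noteq> 0\<close> by simp_all
  with qs have "cross3 (p - q) (s - q) = 0"
    by (simp add: Cross3.left_diff_distrib Cross3.right_diff_distrib cross_skew[of q s])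
  then have "collinear {p, q, s}"
    by (simp add: cross_eq_0 collinear_3[of p q s])
  with assms(3) show False ..
qed

lemma rdist_commute: "rdist a i j = rdist a j i"
  by (simp add: rdist_def norm_minus_commute)

lemma torque_eq:
  assumes "distinct [i, j, k]" and "{i, j, k} = {1, 2, 3}"
  shows "torque m a i = cross3 (a i)
    ((m i * m j / rdist a i j ^ 3) *\<^sub>R (a j - a i) + (m i * m k / rdist a i k ^ 3) *\<^sub>R (a k - a i))"
proof -
  have "{1, 2, 3} - {i} = {j, k}"
    using assms by auto
  with \<open>distinct [i, j, k]\<close> show ?thesis
    by (simp add: torque_def)
qed

lemma torque_eq_0_iff:
  assumes "distinct [i, j, k]" and "{i, j, k} = {1, 2, 3}"
    and "m i \<noteq> 0" "m j \<noteq> 0" "m k \<noteq> 0"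
    and cm: "m i *\<^sub>R a i + m j *\<^sub>R a j + m k *\<^sub>R a k = 0"
    and "\<not> collinear {a i, a j, a k}"
  shows "torque m a i = 0 \<longleftrightarrow> rdist a i j = rdist a i k"
proof -
  let ?c = "m i * m j * m k * (1 / rdist a i j ^ 3 - 1 / rdist a i k ^ 3)"
  have torque: "m i *\<^sub>R torque m a i = ?c *\<^sub>R cross3 (a j) (a k)"
    unfolding torque_eq[OF assms(1,2)] cross3_two_forces_center_of_mass[OF cm]
    by (simp add: right_diff_distrib)
  have "cross3 (a j) (a k) \<noteq> 0"
    using cross3_ne_0_center_of_mass[OF cm \<open>m i \<noteq> 0\<close>] assms(7) by blast
  with torque \<open>m i \<noteq> 0\<close> have "torque m a i = 0 \<longleftrightarrow> ?c = 0"
    by (metis scale_eq_0_iff)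
  also have "\<dots> \<longleftrightarrow> 1 / rdist a i j ^ 3 = 1 / rdist a i k ^ 3"
    using \<open>m i \<noteq> 0\<close> \<open>m j \<noteq> 0\<close> \<open>m k \<noteq> 0\<close> by simp
  also have "\<dots> \<longleftrightarrow> rdist a i j ^ 3 = rdist a i k ^ 3"
    by (metis inverse_eq_divide inverse_eq_iff_eq)
  also have "\<dots> \<longleftrightarrow> rdist a i j = rdist a i k"
    by (simp add: rdist_def power_eq_iff_eq_base)
  finally show ?thesis .
qed

theorem mainTheorem11:
  fixes m :: "nat \<Rightarrow> real" and a :: "nat \<Rightarrow> real^3"
  assumes "m 1 > 0" "m 2 > 0" "m 3 > 0"
    and "m 1 + m 2 + m 3 = 1"
    and "m 1 *\<^sub>R a 1 + m 2 *\<^sub>R a 2 + m 3 *\<^sub>R a 3 = 0"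
    and "\<not> collinear {a 1, a 2, a 3}"
  shows "(torque m a 1 = 0 \<longleftrightarrow> rdist a 1 2 = rdist a 1 3)
       \<and> ((torque m a 1 = 0 \<and> torque m a 2 = 0 \<and> torque m a 3 = 0)
            \<longleftrightarrow> (rdist a 1 2 = rdist a 1 3 \<and> rdist a 1 2 = rdist a 2 3))"
proof -
  have masses: "m 1 \<noteq> 0" "m 2 \<noteq> 0" "m 3 \<noteq> 0"
    using assms(1-3) by simp_all
  have t1: "torque m a 1 = 0 \<longleftrightarrow> rdist a 1 2 = rdist a 1 3"
    by (rule torque_eq_0_iff) (use assms(5,6) masses in auto)
  have t2: "torque m a 2 = 0 \<longleftrightarrow> rdist a 2 1 = rdist a 2 3"
    by (rule torque_eq_0_iff) (use assms(5,6) masses in \<open>auto simp: add_ac insert_commute\<close>)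
  have t3: "torque m a 3 = 0 \<longleftrightarrow> rdist a 3 1 = rdist a 3 2"
    by (rule torque_eq_0_iff) (use assms(5,6) masses in \<open>auto simp: add_ac insert_commute\<close>)
  show ?thesis
    using t1 t2 t3 by (auto simp: rdist_commute)
qed

end
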